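(* Let $\mathcal{P}_n$ be a Poisson process of intensity $n$ on $[0,1]^d$, and let $\mathcal{C}(n,r)=\mathcal{C}(\mathcal{P}_n,r)$ be the Čech complex with radius-$r$ balls. Let $\alpha > 0$ be fixed. There exists a constant $C_2 > 0$ depending only on $\alpha$ and $d$ such that if $nr^d \le \frac{C_2}{(\log n)^{\alpha}}$ and $m \ge \alpha^{-1}\frac{\log n}{\log\log n}$, then with high probability (i.e. with probability tending to $1$ as $n\to\infty$) $\mathcal{C}(n,r)$ has no connected components with more than $m$ vertices. *)

theory Defs
  imports "HOL-Probability.Probability"
begin

text \<open>Sample space: pairs (K, X) with K ~ Poisson(\<lambda>) and X an i.i.d. sequence of
  uniform points in the cube, independent of K. The process is the point set
  {X 0, ..., X (K-1)} (standard construction of a homogeneous Poisson process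
  on a set of finite volume).\<close>

definition unit_cube :: "(real^'d) set" where
  "unit_cube = cbox 0 One"

definition poisson_process :: "real \<Rightarrow> (nat \<times> (nat \<Rightarrow> real^'d)) measure" where
  "poisson_process lam =
     measure_pmf (poisson_pmf lam) \<Otimes>\<^sub>M
     (\<Pi>\<^sub>M i\<in>(UNIV::nat set). uniform_measure lborel (unit_cube :: (real^'d) set))"

text \<open>1-skeleton of the Cech complex with balls of radius r: the vertices
  (indexed by i < K) X i, X j are joined iff the closed balls of radius r around
  them intersect, i.e. dist (X i) (X j) \<le> 2 r. Connected components of the
  Cech complex are those of its 1-skeleton.\<close>

definition cech_edge :: "real \<Rightarrow> nat \<Rightarrow> (nat \<Rightarrow> 'a::metric_space) \<Rightarrow> (nat \<times> nat) set" where
  "cech_edge r K X = {(i, j). i < K \<and> j < K \<and> i \<noteq> j \<and> dist (X i) (X j) \<le> 2 * r}"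

definition cech_component :: "real \<Rightarrow> nat \<Rightarrow> (nat \<Rightarrow> 'a::metric_space) \<Rightarrow> nat \<Rightarrow> nat set" where
  "cech_component r K X i = {j. j < K \<and> (i, j) \<in> (cech_edge r K X)\<^sup>*}"

definition no_component_larger :: "real \<Rightarrow> nat \<Rightarrow> nat \<times> (nat \<Rightarrow> 'a::metric_space) \<Rightarrow> bool" where
  "no_component_larger r m \<omega> =
     (\<forall>i < fst \<omega>. card (cech_component r (fst \<omega>) (snd \<omega>) i) \<le> m)"

end

theory Submission
  imports Defs "HOL-Real_Asymp.Real_Asymp"
begin

text \<open>A component with more than \<open>m\<close> vertices contains a breadth-first tree on \<open>m + 1\<close> of
  them. Parent maps of breadth-first trees are monotone, so there are at most \<open>4\<^sup>m\<^sup>+\<^sup>1\<close> tree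
  shapes, and for a fixed shape and fixed labels the probability that every vertex lies within \<open>2r\<close>
  of its parent is at most \<open>((4r)\<^sup>d)\<^sup>m\<close> (integrate out the vertices in reverse
  breadth-first order, each one a leaf of the remaining tree). Given \<open>K \<le> 2n\<close> points, the
  union bound is \<open>(2n)\<^sup>m\<^sup>+\<^sup>1 4\<^sup>m\<^sup>+\<^sup>1 ((4r)\<^sup>d)\<^sup>m\<close>, which the
  hypotheses on \<open>r\<close> and \<open>m\<close> make at most \<open>8 \<cdot> 2\<^sup>-\<^sup>m\<close>; the event \<open>K > 2n\<close> has
  probability at most \<open>E[2\<^sup>K] / 4\<^sup>n = e\<^sup>n / 4\<^sup>n\<close>.\<close>

section \<open>Points that are close along a tree\<close>

definition close_along_tree :: "real \<Rightarrow> nat \<Rightarrow> (nat \<Rightarrow> 'i) \<Rightarrow> (nat \<Rightarrow> nat) \<Rightarrow> ('i \<Rightarrow> 'a::metric_space) \<Rightarrow> bool" where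
  "close_along_tree \<rho> k v p Y \<longleftrightarrow> (\<forall>s\<in>{1..<k}. dist (Y (v s)) (Y (v (p s))) \<le> \<rho>)"

lemma close_along_tree_Suc:
  "1 \<le> k \<Longrightarrow> close_along_tree \<rho> (Suc k) v p Y \<longleftrightarrow>
     close_along_tree \<rho> k v p Y \<and> dist (Y (v k)) (Y (v (p k))) \<le> \<rho>"
  by (auto simp: close_along_tree_def less_Suc_eq)

lemma close_along_tree_cong:
  assumes "\<forall>s\<in>{1..<k}. p s < s" "\<And>s. s < k \<Longrightarrow> Y (v s) = Y' (v s)"
  shows "close_along_tree \<rho> k v p Y = close_along_tree \<rho> k v p Y'"
proof -
  have "Y (v (p s)) = Y' (v (p s))" if "s \<in> {1..<k}" for s
    using assms that by (meson atLeastLessThan_iff order.strict_trans)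
  then show ?thesis using assms(2) by (simp add: close_along_tree_def)
qed

lemma close_along_tree_fun_upd:
  assumes "1 \<le> k" "\<forall>s\<in>{1..<Suc k}. p s < s" "v k \<notin> v ` {..<k}"
  shows "close_along_tree \<rho> (Suc k) v p (x(v k := y)) \<longleftrightarrow>
           close_along_tree \<rho> k v p x \<and> y \<in> cball (x (v (p k))) \<rho>"
proof -
  have old: "(x(v k := y)) (v s) = x (v s)" if "s < k" for s
    using assms(3) that by (metis fun_upd_other imageI lessThan_iff)
  then have "close_along_tree \<rho> k v p (x(v k := y)) = close_along_tree \<rho> k v p x"
    using assms(2) by (intro close_along_tree_cong) auto
  moreover have "p k < k"
    using assms(1,2) by auto
  ultimately show ?thesis
    using assms(1) old[of "p k"] by (simp add: close_along_tree_Suc dist_commute)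
qed

lemma tree_vertices_in_image:
  fixes p :: "nat \<Rightarrow> nat"
  assumes "\<forall>s\<in>{1..<k}. p s < s"
  shows "\<forall>s\<in>{1..<k}. v s \<in> v ` {..<k} \<and> v (p s) \<in> v ` {..<k}"
proof
  fix s assume s: "s \<in> {1..<k}"
  then have "p s < k"
    using assms by (meson atLeastLessThan_iff less_trans)
  then show "v s \<in> v ` {..<k} \<and> v (p s) \<in> v ` {..<k}"
    using s by simp
qed

lemma sets_close_along_tree:
  fixes M :: "'a::{metric_space, second_countable_topology} measure"
  assumes "sets M = sets borel" "\<forall>s\<in>{1..<k}. v s \<in> J \<and> v (p s) \<in> J"
  shows "{Y \<in> space (PiM J (\<lambda>_. M)). close_along_tree \<rho> k v p Y} \<in> sets (PiM J (\<lambda>_. M))"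
  unfolding close_along_tree_def
proof (rule sets.sets_Collect_finite_All)
  have component: "(\<lambda>Y. Y j) \<in> borel_measurable (PiM J (\<lambda>_. M))" if "j \<in> J" for j
    using measurable_component_singleton[OF that, of "\<lambda>_. M"]
    unfolding measurable_cong_sets[OF refl assms(1)] .
  fix s assume "s \<in> {1..<k}"
  with assms(2) show "{Y \<in> space (PiM J (\<lambda>_. M)). dist (Y (v s)) (Y (v (p s))) \<le> \<rho>} \<in> sets (PiM J (\<lambda>_. M))"
    by (intro borel_measurable_le borel_measurable_dist component borel_measurable_const) auto
qed simp

lemma emeasure_PiM_close_along_tree_Suc_le:
  fixes M :: "'a::{metric_space, second_countable_topology} measure"
  assumes M: "prob_space M" "sets M = sets borel"
    and balls: "\<And>c. emeasure M (cball c \<rho>) \<le> q"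
    and k: "1 \<le> k" and p: "\<forall>s\<in>{1..<Suc k}. p s < s" and vk: "v k \<notin> v ` {..<k}"
  shows "emeasure (PiM (v ` {..<Suc k}) (\<lambda>_. M))
           {Y \<in> space (PiM (v ` {..<Suc k}) (\<lambda>_. M)). close_along_tree \<rho> (Suc k) v p Y}
         \<le> emeasure (PiM (v ` {..<k}) (\<lambda>_. M))
           {Y \<in> space (PiM (v ` {..<k}) (\<lambda>_. M)). close_along_tree \<rho> k v p Y} * q"
proof -
  interpret product_sigma_finite "\<lambda>_::'i. M"
    by (simp add: product_sigma_finite_def M(1) prob_space_imp_sigma_finite)
  define J where "J = v ` {..<k}"
  define E where "E = {Y \<in> space (PiM J (\<lambda>_. M)). close_along_tree \<rho> k v p Y}"
  define E' where "E' = {Y \<in> space (PiM (insert (v k) J) (\<lambda>_. M)). close_along_tree \<rho> (Suc k) v p Y}"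
  have J_Suc: "v ` {..<Suc k} = insert (v k) J"
    by (auto simp: J_def lessThan_Suc)
  have E: "E \<in> sets (PiM J (\<lambda>_. M))"
    unfolding E_def J_def using p by (intro sets_close_along_tree M(2) tree_vertices_in_image) simp
  have E': "E' \<in> sets (PiM (insert (v k) J) (\<lambda>_. M))"
    unfolding E'_def J_Suc[symmetric] using p by (intro sets_close_along_tree M(2) tree_vertices_in_image)
  have leaf: "(\<integral>\<^sup>+ y. indicator E' (x(v k := y)) \<partial>M) = indicator E x * emeasure M (cball (x (v (p k))) \<rho>)"
    if x: "x \<in> space (PiM J (\<lambda>_. M))" for x
  proof -
    have "x(v k := y) \<in> E' \<longleftrightarrow> x \<in> E \<and> y \<in> cball (x (v (p k))) \<rho>" if "y \<in> space M" for y
    proof -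
      have "x(v k := y) \<in> space (PiM (insert (v k) J) (\<lambda>_. M))"
        using x that by (auto simp: space_PiM PiE_def extensional_def)
      then show ?thesis
        using x close_along_tree_fun_upd[OF k p vk] by (auto simp: E_def E'_def)
    qed
    then have "(\<integral>\<^sup>+ y. indicator E' (x(v k := y)) \<partial>M)
        = (\<integral>\<^sup>+ y. indicator E x * indicator (cball (x (v (p k))) \<rho>) y \<partial>M)"
      by (intro nn_integral_cong) (simp split: split_indicator)
    also have "\<dots> = indicator E x * emeasure M (cball (x (v (p k))) \<rho>)"
      using M(2) by (simp add: nn_integral_cmult_indicator)
    finally show ?thesis .
  qed
  have "emeasure (PiM (insert (v k) J) (\<lambda>_. M)) E'
      = \<integral>\<^sup>+ x. \<integral>\<^sup>+ y. indicator E' (x(v k := y)) \<partial>M \<partial>PiM J (\<lambda>_. M)"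
    using E' vk by (simp add: product_nn_integral_insert J_def flip: nn_integral_indicator)
  also have "\<dots> \<le> \<integral>\<^sup>+ x. indicator E x * q \<partial>PiM J (\<lambda>_. M)"
    by (intro nn_integral_mono) (simp add: leaf mult_left_mono balls)
  also have "\<dots> = emeasure (PiM J (\<lambda>_. M)) E * q"
    using E by (simp add: nn_integral_multc)
  finally show ?thesis
    by (simp add: E_def E'_def J_def J_Suc)
qed

lemma emeasure_PiM_image_close_along_tree_le:
  fixes M :: "'a::{metric_space, second_countable_topology} measure"
  assumes M: "prob_space M" "sets M = sets borel"
    and balls: "\<And>c. emeasure M (cball c \<rho>) \<le> q"
    and "inj_on v {..<k}" "\<forall>s\<in>{1..<k}. p s < s"
  shows "emeasure (PiM (v ` {..<k}) (\<lambda>_. M))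
           {Y \<in> space (PiM (v ` {..<k}) (\<lambda>_. M)). close_along_tree \<rho> k v p Y} \<le> q ^ (k - 1)"
  using assms(4,5)
proof (induction k)
  case (Suc k)
  show ?case
  proof (cases "k = 0")
    case True
    interpret prob_space "PiM (v ` {..<Suc k}) (\<lambda>_. M)"
      by (intro prob_space_PiM M)
    show ?thesis
      using True emeasure_le_1 by simp
  next
    case False
    have vk: "v k \<notin> v ` {..<k}"
      using inj_onD[OF Suc.prems(1), of k] by auto (metis less_SucI less_irrefl)
    have "inj_on v {..<k}" "\<forall>s\<in>{1..<k}. p s < s"
      using Suc.prems by (auto simp: inj_on_def)
    note IH = Suc.IH[OF this]
    have "emeasure (PiM (v ` {..<Suc k}) (\<lambda>_. M))
          {Y \<in> space (PiM (v ` {..<Suc k}) (\<lambda>_. M)). close_along_tree \<rho> (Suc k) v p Y}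
        \<le> emeasure (PiM (v ` {..<k}) (\<lambda>_. M))
          {Y \<in> space (PiM (v ` {..<k}) (\<lambda>_. M)). close_along_tree \<rho> k v p Y} * q"
      using False Suc.prems(2) vk by (intro emeasure_PiM_close_along_tree_Suc_le[OF M balls]) auto
    also have "\<dots> \<le> q ^ (k - 1) * q"
      by (rule mult_right_mono[OF IH]) simp
    also have "\<dots> = q ^ (Suc k - 1)"
      using False by (cases k) (simp_all add: mult.commute)
    finally show ?thesis .
  qed
qed (simp add: prob_space.emeasure_le_1 prob_space_PiM M(1))

lemma emeasure_PiM_close_along_tree_le:
  fixes M :: "'a::{metric_space, second_countable_topology} measure"
  assumes M: "prob_space M" "sets M = sets borel"
    and balls: "\<And>c. emeasure M (cball c \<rho>) \<le> q"
    and v: "inj_on v {..<k}" "v ` {..<k} \<subseteq> I" and p: "\<forall>s\<in>{1..<k}. p s < s"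
  shows "emeasure (PiM I (\<lambda>_. M)) {Y \<in> space (PiM I (\<lambda>_. M)). close_along_tree \<rho> k v p Y}
           \<le> q ^ (k - 1)"
proof -
  interpret product_prob_space "\<lambda>_. M" I
    by (simp add: product_prob_space_def product_prob_space_axioms_def product_sigma_finite_def
        M(1) prob_space_imp_sigma_finite)
  define J where "J = v ` {..<k}"
  define E where "E = {Y \<in> space (PiM J (\<lambda>_. M)). close_along_tree \<rho> k v p Y}"
  have parents: "\<forall>s\<in>{1..<k}. v s \<in> J \<and> v (p s) \<in> J"
    unfolding J_def using p by (rule tree_vertices_in_image)
  have E: "E \<in> sets (PiM J (\<lambda>_. M))"
    unfolding E_def by (intro sets_close_along_tree M(2) parents)
  have "{Y \<in> space (PiM I (\<lambda>_. M)). close_along_tree \<rho> k v p Y} = prod_emb I (\<lambda>_. M) J E"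
    using v(2) parents by (auto simp: prod_emb_def E_def J_def close_along_tree_def space_PiM PiE_def Pi_def)
  also have "emeasure (PiM I (\<lambda>_. M)) \<dots> = emeasure (PiM J (\<lambda>_. M)) E"
    using v(2) E by (intro emeasure_PiM_emb') (auto simp: J_def)
  also have "\<dots> \<le> q ^ (k - 1)"
    unfolding E_def J_def by (rule emeasure_PiM_image_close_along_tree_le[OF M balls v(1) p])
  finally show ?thesis .
qed

section \<open>Breadth-first trees\<close>

lemma strict_mono_on_eq_if_image_eq:
  fixes f g :: "nat \<Rightarrow> 'a::linorder"
  assumes "strict_mono_on {a..<b} f" "strict_mono_on {a..<b} g"
    and "f ` {a..<b} = g ` {a..<b}" and "s \<in> {a..<b}"
  shows "f s = g s"
proof -
  have "sorted_wrt (<) (map h [a..<b])" if "strict_mono_on {a..<b} h" for h :: "nat \<Rightarrow> 'a"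
    unfolding sorted_wrt_map
    by (rule sorted_wrt_mono_rel[OF _ sorted_wrt_upt]) (use that in \<open>auto intro: monotone_onD\<close>)
  then have "map f [a..<b] = map g [a..<b]"
    using assms(1-3) by (intro sorted_distinct_set_unique) (simp_all add: strict_sorted_iff)
  then show ?thesis
    using assms(4) by (simp add: map_eq_conv)
qed

definition bfs_parent_maps :: "nat \<Rightarrow> (nat \<Rightarrow> nat) set" where
  "bfs_parent_maps k = {p \<in> {1..<k} \<rightarrow>\<^sub>E {..<k}. (\<forall>s\<in>{1..<k}. p s < s) \<and> mono_on {1..<k} p}"

lemma finite_bfs_parent_maps: "finite (bfs_parent_maps k)"
  by (rule finite_subset[of _ "{1..<k} \<rightarrow>\<^sub>E {..<k}"]) (auto simp: bfs_parent_maps_def intro: finite_PiE)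

lemma card_bfs_parent_maps_le: "card (bfs_parent_maps k) \<le> 4 ^ k"
proof -
  \<comment> \<open>\<open>s + p s\<close> is strictly increasing, so its image, a subset of \<open>{..<2k}\<close>, determines \<open>p\<close>\<close>
  define code where "code p = (\<lambda>s. s + p s) ` {1..<k}" for p :: "nat \<Rightarrow> nat"
  have strict: "strict_mono_on {1..<k} (\<lambda>s. s + p s)" if "p \<in> bfs_parent_maps k" for p
    using that by (auto simp: bfs_parent_maps_def monotone_on_def intro: add_less_le_mono)
  have "inj_on code (bfs_parent_maps k)"
  proof (rule inj_onI)
    fix p p' assume p: "p \<in> bfs_parent_maps k" and p': "p' \<in> bfs_parent_maps k" and "code p = code p'"
    then have "s + p s = s + p' s" if "s \<in> {1..<k}" for s
      using strict_mono_on_eq_if_image_eq[OF strict[OF p] strict[OF p'] _ that] by (simp add: code_def)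
    then show "p = p'"
      using p p' by (intro PiE_ext[of _ "{1..<k}" "\<lambda>_. {..<k}"]) (auto simp: bfs_parent_maps_def)
  qed
  moreover have "code ` bfs_parent_maps k \<subseteq> Pow {..<2 * k}"
    by (auto simp: code_def bfs_parent_maps_def)
  ultimately have "card (bfs_parent_maps k) \<le> card (Pow {..<2 * k})"
    by (metis card_image card_mono finite_Pow_iff finite_lessThan)
  then show ?thesis
    by (simp add: card_Pow power_mult)
qed

lemma card_labelled_bfs_trees_le:
  "card ({v \<in> {..<k} \<rightarrow>\<^sub>E {..<K}. inj_on v {..<k}} \<times> bfs_parent_maps k) \<le> K ^ k * 4 ^ k"
proof -
  have "card ({v \<in> {..<k} \<rightarrow>\<^sub>E {..<K}. inj_on v {..<k}} \<times> bfs_parent_maps k)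
      \<le> card ({..<k} \<rightarrow>\<^sub>E {..<K}) * card (bfs_parent_maps k)"
    unfolding card_cartesian_product by (intro mult_right_mono card_mono finite_PiE) auto
  also have "\<dots> \<le> K ^ k * 4 ^ k"
    by (simp add: card_PiE card_bfs_parent_maps_le)
  finally show ?thesis .
qed

lemma rtrancl_Image_leaves_set:
  assumes "i \<in> S" "y \<in> E\<^sup>* `` {i}" "y \<notin> S"
  shows "\<exists>x\<in>S. \<exists>z. z \<notin> S \<and> (x, z) \<in> E"
proof -
  have "(i, y) \<in> E\<^sup>*" using assms(2) by simp
  then show ?thesis using assms(3)
    by (induction rule: rtrancl_induct) (use assms(1) in blast)+
qed

text \<open>The last clause says that every vertex listed before the parent of a listed vertex is
  already fully explored; it is what keeps the parent map monotone as the enumeration grows.\<close>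

definition bfs_prefix :: "('a \<times> 'a) set \<Rightarrow> 'a \<Rightarrow> nat \<Rightarrow> (nat \<Rightarrow> 'a) \<Rightarrow> (nat \<Rightarrow> nat) \<Rightarrow> bool" where
  "bfs_prefix E i j v p \<longleftrightarrow> v 0 = i \<and> inj_on v {..<j} \<and> v ` {..<j} \<subseteq> E\<^sup>* `` {i} \<and>
     (\<forall>s\<in>{1..<j}. p s < s \<and> (v (p s), v s) \<in> E) \<and> mono_on {1..<j} p \<and>
     (\<forall>s\<in>{1..<j}. \<forall>t<p s. E `` {v t} \<subseteq> v ` {..<j})"

lemma bfs_prefix_parent_le:
  assumes "bfs_prefix E i j v p" "(v t, y) \<in> E" "y \<notin> v ` {..<j}" "s \<in> {1..<j}"
  shows "p s \<le> t"
proof (rule ccontr)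
  assume "\<not> p s \<le> t"
  then have "E `` {v t} \<subseteq> v ` {..<j}"
    using assms(1,4) unfolding bfs_prefix_def by (meson not_le)
  then show False
    using assms(2,3) by auto
qed

lemma bfs_prefix_mono_extend:
  assumes bfs: "bfs_prefix E i j v p" and "(v t0, y) \<in> E" "y \<notin> v ` {..<j}"
  shows "mono_on {1..<Suc j} (p(j := t0))"
proof (rule monotone_onI)
  have mono: "mono_on {1..<j} p"
    using bfs by (simp add: bfs_prefix_def)
  fix s s' assume "s \<in> {1..<Suc j}" "s' \<in> {1..<Suc j}" "s \<le> s'"
  then consider "s' = j" "s = j" | "s' = j" "s \<in> {1..<j}" | "s \<in> {1..<j}" "s' \<in> {1..<j}"
    by fastforce
  then show "(p(j := t0)) s \<le> (p(j := t0)) s'"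
    by cases (use bfs_prefix_parent_le[OF assms] monotone_onD[OF mono _ _ \<open>s \<le> s'\<close>] in simp_all)
qed

lemma bfs_prefix_explored_extend:
  assumes bfs: "bfs_prefix E i j v p" and "t0 < j" and explored: "\<forall>t<t0. E `` {v t} \<subseteq> v ` {..<j}"
  shows "\<forall>s\<in>{1..<Suc j}. \<forall>t<(p(j := t0)) s. E `` {(v(j := y)) t} \<subseteq> (v(j := y)) ` {..<Suc j}"
proof (intro ballI allI impI)
  fix s t assume "s \<in> {1..<Suc j}" "t < (p(j := t0)) s"
  then consider "s = j" "t < t0" | "s \<in> {1..<j}" "t < p s"
    by (cases "s = j") auto
  then have "E `` {v t} \<subseteq> v ` {..<j} \<and> t < j"
  proof cases
    case 1
    then show ?thesis using explored \<open>t0 < j\<close> by simp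
  next
    case 2
    then show ?thesis using bfs unfolding bfs_prefix_def by (meson less_trans atLeastLessThan_iff)
  qed
  then show "E `` {(v(j := y)) t} \<subseteq> (v(j := y)) ` {..<Suc j}"
    by (auto simp: lessThan_Suc)
qed

lemma bfs_prefix_extend:
  assumes bfs: "bfs_prefix E i j v p" and t0: "t0 < j" "(v t0, y) \<in> E" "y \<notin> v ` {..<j}"
    and explored: "\<forall>t<t0. E `` {v t} \<subseteq> v ` {..<j}"
  shows "bfs_prefix E i (Suc j) (v(j := y)) (p(j := t0))"
proof -
  from bfs have root: "v 0 = i" and inj: "inj_on v {..<j}" and reach: "v ` {..<j} \<subseteq> E\<^sup>* `` {i}"
    and parent: "\<And>s. s \<in> {1..<j} \<Longrightarrow> p s < s \<and> (v (p s), v s) \<in> E"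
    unfolding bfs_prefix_def by blast+
  have "v t0 \<in> E\<^sup>* `` {i}"
    using reach t0(1) by auto
  then have "y \<in> E\<^sup>* `` {i}"
    using t0(2) by (auto intro: rtrancl_into_rtrancl)
  then have "(v(j := y)) ` {..<Suc j} \<subseteq> E\<^sup>* `` {i}"
    using reach by (auto simp: lessThan_Suc)
  moreover have "(v(j := y)) 0 = i" "inj_on (v(j := y)) {..<Suc j}"
    using root inj t0 by (simp_all add: lessThan_Suc inj_on_fun_updI)
  moreover have "\<forall>s\<in>{1..<Suc j}. (p(j := t0)) s < s \<and> ((v(j := y)) ((p(j := t0)) s), (v(j := y)) s) \<in> E"
  proof
    fix s assume s: "s \<in> {1..<Suc j}"
    show "(p(j := t0)) s < s \<and> ((v(j := y)) ((p(j := t0)) s), (v(j := y)) s) \<in> E"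
    proof (cases "s = j")
      case True
      then show ?thesis using t0(1,2) by simp
    next
      case False
      then have "s \<in> {1..<j}" using s by simp
      then show ?thesis using parent[of s] by simp
    qed
  qed
  ultimately show ?thesis
    using bfs_prefix_mono_extend[OF bfs t0(2,3)] bfs_prefix_explored_extend[OF bfs t0(1) explored]
    unfolding bfs_prefix_def by blast
qed

lemma bfs_prefix_exists:
  assumes "1 \<le> j" "j \<le> card (E\<^sup>* `` {i})"
  shows "\<exists>v p. bfs_prefix E i j v p"
  using assms
proof (induction j rule: dec_induct)
  case base
  show ?case
    by (auto simp: bfs_prefix_def lessThan_Suc intro!: exI[of _ "\<lambda>_. i"])
next
  case (step j)
  then obtain v p where bfs: "bfs_prefix E i j v p"
    by auto
  define S where "S = v ` {..<j}"
  have "card S = j" "S \<subseteq> E\<^sup>* `` {i}" "i \<in> S"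
    using bfs step.hyps(1) by (auto simp: S_def bfs_prefix_def card_image)
  moreover have "S \<noteq> E\<^sup>* `` {i}"
    using step.prems \<open>card S = j\<close> by auto
  ultimately obtain y0 where "y0 \<in> E\<^sup>* `` {i}" "y0 \<notin> S"
    by blast
  then obtain x z where "x \<in> S" "z \<notin> S" "(x, z) \<in> E"
    using rtrancl_Image_leaves_set \<open>i \<in> S\<close> by metis
  then have "\<exists>t<j. \<not> E `` {v t} \<subseteq> S"
    by (auto simp: S_def)
  define t0 where "t0 = (LEAST t. t < j \<and> \<not> E `` {v t} \<subseteq> S)"
  have "t0 < j" "\<not> E `` {v t0} \<subseteq> S"
    using LeastI_ex[OF \<open>\<exists>t<j. _\<close>] by (simp_all add: t0_def)
  moreover have "\<forall>t<t0. E `` {v t} \<subseteq> S"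
    using not_less_Least \<open>t0 < j\<close> unfolding t0_def by fastforce
  ultimately obtain y where "(v t0, y) \<in> E" "y \<notin> S" "t0 < j" "\<forall>t<t0. E `` {v t} \<subseteq> S"
    by blast
  then show ?case
    using bfs_prefix_extend[OF bfs] by (metis S_def)
qed

lemma exists_bfs_tree:
  assumes "k \<le> card (E\<^sup>* `` {i})"
  obtains v p where "p \<in> bfs_parent_maps k" "inj_on v {..<k}" "v ` {..<k} \<subseteq> E\<^sup>* `` {i}"
    "\<forall>s\<in>{1..<k}. (v (p s), v s) \<in> E"
proof (cases "k = 0")
  case True
  then show ?thesis
    using that[of "\<lambda>_. undefined"] by (simp add: bfs_parent_maps_def)
next
  case False
  then obtain v p where bfs: "bfs_prefix E i k v p"
    using bfs_prefix_exists assms by (metis less_one not_le)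
  then have "restrict p {1..<k} \<in> bfs_parent_maps k"
    by (auto simp: bfs_prefix_def bfs_parent_maps_def monotone_on_def intro: order.strict_trans)
  with bfs show ?thesis
    using that by (auto simp: bfs_prefix_def)
qed

section \<open>Uniform points in the unit cube\<close>

lemma cball_subset_cbox_One:
  fixes c :: "'a::euclidean_space"
  shows "cball c \<rho> \<subseteq> cbox (c - \<rho> *\<^sub>R One) (c + \<rho> *\<^sub>R One)"
proof
  fix y assume "y \<in> cball c \<rho>"
  then have "\<bar>(y - c) \<bullet> b\<bar> \<le> \<rho>" if "b \<in> Basis" for b
    using Basis_le_norm[OF that, of "y - c"] by (simp add: dist_norm norm_minus_commute)
  then show "y \<in> cbox (c - \<rho> *\<^sub>R One) (c + \<rho> *\<^sub>R One)"
    by (auto simp: mem_box inner_diff_left inner_add_left abs_le_iff algebra_simps)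
qed

lemma emeasure_lborel_cball_le:
  fixes c :: "'a::euclidean_space"
  shows "emeasure lborel (cball c \<rho>) \<le> ennreal ((2 * \<rho>) ^ DIM('a))"
proof (cases "\<rho> < 0")
  case True
  then show ?thesis by simp
next
  case False
  have "emeasure lborel (cball c \<rho>) \<le> emeasure lborel (cbox (c - \<rho> *\<^sub>R One) (c + \<rho> *\<^sub>R One))"
    by (intro emeasure_mono cball_subset_cbox_One) auto
  also have "\<dots> = ennreal ((2 * \<rho>) ^ DIM('a))"
    using False by (simp add: emeasure_lborel_cbox_eq inner_diff_left inner_add_left algebra_simps
        flip: prod_constant)
  finally show ?thesis .
qed

lemma emeasure_lborel_unit_cube: "emeasure lborel (unit_cube :: (real^'d) set) = 1"
  by (simp add: unit_cube_def emeasure_lborel_cbox_eq inner_Basis)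

abbreviation uniform_cube :: "(real^'d) measure" where
  "uniform_cube \<equiv> uniform_measure lborel unit_cube"

abbreviation uniform_points :: "(nat \<Rightarrow> real^'d) measure" where
  "uniform_points \<equiv> PiM UNIV (\<lambda>_. uniform_cube)"

lemma prob_space_uniform_cube: "prob_space uniform_cube"
  by (rule prob_space_uniform_measure) (simp_all add: emeasure_lborel_unit_cube)

lemma emeasure_uniform_cube_cball_le:
  "emeasure uniform_cube (cball (c :: real^'d) \<rho>) \<le> ennreal ((2 * \<rho>) ^ CARD('d))"
proof -
  have "emeasure uniform_cube (cball c \<rho>) = emeasure lborel (unit_cube \<inter> cball c \<rho>)"
    by (simp add: emeasure_uniform_measure emeasure_lborel_unit_cube unit_cube_def divide_ennreal_def)
  also have "\<dots> \<le> emeasure lborel (cball c \<rho>)"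
    by (rule emeasure_mono) auto
  also have "\<dots> \<le> ennreal ((2 * \<rho>) ^ CARD('d))"
    using emeasure_lborel_cball_le[of c \<rho>] by simp
  finally show ?thesis .
qed

section \<open>Large components of the Cech graph\<close>

lemma cech_component_eq_Image:
  assumes "i < K"
  shows "cech_component r K X i = (cech_edge r K X)\<^sup>* `` {i}"
proof -
  have "j < K" if "(i, j) \<in> (cech_edge r K X)\<^sup>*" for j
    using that assms by (induction rule: rtrancl_induct) (auto simp: cech_edge_def)
  then show ?thesis
    by (auto simp: cech_component_def)
qed

lemma close_tree_if_large_component:
  assumes "\<not> no_component_larger r m (K, X)"
  obtains v p where "v \<in> {..<Suc m} \<rightarrow>\<^sub>E {..<K}" "inj_on v {..<Suc m}" "p \<in> bfs_parent_maps (Suc m)"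
    "close_along_tree (2 * max r 0) (Suc m) v p X"
proof -
  obtain i where "i < K" "Suc m \<le> card (cech_component r K X i)"
    using assms by (auto simp: no_component_larger_def not_le)
  then obtain v p where p: "p \<in> bfs_parent_maps (Suc m)" and v: "inj_on v {..<Suc m}"
    "v ` {..<Suc m} \<subseteq> cech_component r K X i"
    and edges: "\<forall>s\<in>{1..<Suc m}. (v (p s), v s) \<in> cech_edge r K X"
    using exists_bfs_tree cech_component_eq_Image by metis
  have "close_along_tree (2 * max r 0) (Suc m) v p X"
    using edges by (fastforce simp: close_along_tree_def cech_edge_def dist_commute)
  moreover have "close_along_tree (2 * max r 0) (Suc m) (restrict v {..<Suc m}) p X
      = close_along_tree (2 * max r 0) (Suc m) v p X"
    using p by (auto simp: close_along_tree_def bfs_parent_maps_def)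
  moreover have "restrict v {..<Suc m} \<in> {..<Suc m} \<rightarrow>\<^sub>E {..<K}"
    using v(2) by (auto simp: cech_component_def)
  ultimately show ?thesis
    using that p v(1) by (metis inj_on_restrict_eq)
qed

lemma emeasure_large_component_le:
  "emeasure uniform_points {X \<in> space uniform_points. \<not> no_component_larger r m (K, X :: nat \<Rightarrow> real^'d)}
     \<le> ennreal (real K ^ Suc m * 4 ^ Suc m * ((4 * max r 0) ^ CARD('d)) ^ m)"
proof -
  define k where "k = Suc m"
  define \<rho> where "\<rho> = max r 0"
  define q where "q = (4 * \<rho>) ^ CARD('d)"
  define F where "F = {v \<in> {..<k} \<rightarrow>\<^sub>E {..<K}. inj_on v {..<k}} \<times> bfs_parent_maps k"
  define T where "T vp = {X \<in> space uniform_points. close_along_tree (2 * \<rho>) k (fst vp) (snd vp) (X :: nat \<Rightarrow> real^'d)}"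
    for vp
  have q: "0 \<le> q"
    by (simp add: q_def \<rho>_def)
  have F: "finite F"
    by (simp add: F_def finite_bfs_parent_maps finite_PiE)
  have "real (card F) \<le> real (K ^ k * 4 ^ k)"
    unfolding F_def by (simp only: of_nat_le_iff card_labelled_bfs_trees_le)
  then have card_F: "real (card F) \<le> real K ^ k * 4 ^ k"
    by simp
  have T: "T vp \<in> sets uniform_points" for vp
    unfolding T_def by (rule sets_close_along_tree) simp_all
  have T_le: "emeasure uniform_points (T vp) \<le> ennreal q ^ m" if "vp \<in> F" for vp
  proof -
    have "emeasure uniform_points (T vp) \<le> ennreal ((2 * (2 * \<rho>)) ^ CARD('d)) ^ (k - 1)"
      using that unfolding T_def
      by (intro emeasure_PiM_close_along_tree_le[OF prob_space_uniform_cube] emeasure_uniform_cube_cball_le)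
        (auto simp: F_def bfs_parent_maps_def)
    then show ?thesis
      by (simp add: k_def q_def)
  qed
  have "{X \<in> space uniform_points. \<not> no_component_larger r m (K, X :: nat \<Rightarrow> real^'d)} \<subseteq> (\<Union>vp\<in>F. T vp)"
  proof (intro subsetI, elim CollectE conjE)
    fix X :: "nat \<Rightarrow> real^'d" assume "X \<in> space uniform_points" "\<not> no_component_larger r m (K, X)"
    then show "X \<in> (\<Union>vp\<in>F. T vp)"
      by (elim close_tree_if_large_component) (force simp: F_def T_def k_def \<rho>_def)
  qed
  then have "emeasure uniform_points {X \<in> space uniform_points. \<not> no_component_larger r m (K, X :: nat \<Rightarrow> real^'d)}
      \<le> emeasure uniform_points (\<Union>vp\<in>F. T vp)"
    using F T by (intro emeasure_mono) auto
  also have "\<dots> \<le> (\<Sum>vp\<in>F. emeasure uniform_points (T vp))"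
    using F T by (intro emeasure_subadditive_finite) auto
  also have "\<dots> \<le> of_nat (card F) * ennreal q ^ m"
    using T_le by (rule sum_bounded_above)
  also have "\<dots> = ennreal (real (card F) * q ^ m)"
    using q by (simp add: ennreal_mult ennreal_power ennreal_of_nat_eq_real_of_nat)
  also have "\<dots> \<le> ennreal (real K ^ k * 4 ^ k * q ^ m)"
    using card_F q by (intro ennreal_leI mult_right_mono) auto
  finally show ?thesis
    by (simp add: k_def q_def \<rho>_def)
qed

lemma measurable_uniform_points_component:
  "(\<lambda>X. X i) \<in> borel_measurable (uniform_points :: (nat \<Rightarrow> real^'d) measure)"
proof -
  have "sets (uniform_cube :: (real^'d) measure) = sets borel"
    by simp
  then show ?thesis
    using measurable_component_singleton[of i UNIV "\<lambda>_. uniform_cube :: (real^'d) measure"]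
    unfolding measurable_cong_sets[OF refl] by simp
qed

lemma measurable_cech_edge:
  "cech_edge r K \<in> uniform_points \<rightarrow>\<^sub>M count_space (Pow ({..<K} \<times> {..<K}))"
proof (rule measurable_count_space_eq2[THEN iffD2], simp, intro conjI ballI)
  have edges: "cech_edge r K X \<subseteq> {..<K} \<times> {..<K}" for X :: "nat \<Rightarrow> real^'d"
    by (auto simp: cech_edge_def)
  then show "cech_edge r K \<in> space uniform_points \<rightarrow> Pow ({..<K} \<times> {..<K})"
    by auto
  fix E assume E: "E \<in> Pow ({..<K} \<times> {..<K})"
  have "cech_edge r K X = E \<longleftrightarrow> (\<forall>ij\<in>{..<K} \<times> {..<K}. (ij \<in> E) = (ij \<in> cech_edge r K X))"
    for X :: "nat \<Rightarrow> real^'d"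
    using edges[of X] E by blast
  then have "cech_edge r K -` {E} \<inter> space uniform_points =
      {X \<in> space uniform_points. \<forall>ij\<in>{..<K} \<times> {..<K}. (ij \<in> E) = (ij \<in> cech_edge r K X)}"
    by auto
  also have "\<dots> \<in> sets uniform_points"
  proof (rule sets.sets_Collect_finite_All, safe)
    fix i j
    have "{X \<in> space uniform_points. dist (X i) (X j) \<le> 2 * r} \<in> sets uniform_points"
      by (intro borel_measurable_le borel_measurable_dist measurable_uniform_points_component
          borel_measurable_const)
    then show "{X \<in> space uniform_points. ((i, j) \<in> E) = ((i, j) \<in> cech_edge r K X)}
        \<in> sets uniform_points"
      by (cases "(i, j) \<in> E"; cases "i < K \<and> j < K \<and> i \<noteq> j")
        (simp_all add: cech_edge_def sets.sets_Collect_neg)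
  qed simp
  finally show "cech_edge r K -` {E} \<inter> space uniform_points \<in> sets uniform_points" .
qed

lemma sets_no_component_larger:
  "{X \<in> space uniform_points. no_component_larger r m (K, X :: nat \<Rightarrow> real^'d)} \<in> sets uniform_points"
proof -
  have "Measurable.pred uniform_points
      (\<lambda>X :: nat \<Rightarrow> real^'d. \<forall>i<K. card {j. j < K \<and> (i, j) \<in> (cech_edge r K X)\<^sup>*} \<le> m)"
    using measurable_compose[OF measurable_cech_edge measurable_count_space] .
  then show ?thesis
    unfolding pred_def no_component_larger_def cech_component_def fst_conv snd_conv .
qed

section \<open>Poissonization\<close>

lemma prob_space_poisson_process: "prob_space (poisson_process lam)"
  unfolding poisson_process_def
  by (intro prob_space_pair prob_space_measure_pmf prob_space_PiM prob_space_uniform_cube)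

lemma sets_poisson_process_no_component_larger:
  "{\<omega> \<in> space (poisson_process lam). no_component_larger r m \<omega>}
     \<in> sets (poisson_process lam :: (nat \<times> (nat \<Rightarrow> real^'d)) measure)"
proof -
  have "{\<omega> \<in> space (poisson_process lam). no_component_larger r m \<omega>}
      = (\<Union>K. {K} \<times> {X \<in> space uniform_points. no_component_larger r m (K, X :: nat \<Rightarrow> real^'d)})"
    by (auto simp: poisson_process_def space_pair_measure)
  also have "\<dots> \<in> sets (poisson_process lam)"
    unfolding poisson_process_def
    by (intro sets.countable_UN image_subsetI pair_measureI sets_no_component_larger) simp
  finally show ?thesis .
qed

lemma nn_integral_poisson_pow:
  assumes "0 < lam" "0 \<le> c"
  shows "(\<integral>\<^sup>+ K. ennreal (c ^ K) \<partial>measure_pmf (poisson_pmf lam)) = ennreal (exp ((c - 1) * lam))"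
proof -
  have "(\<lambda>K. exp (-lam) * ((c * lam) ^ K / fact K)) sums (exp (-lam) * exp (c * lam))"
    using exp_converges[of "c * lam"] by (intro sums_mult) (simp add: divide_inverse mult.commute)
  moreover have "exp (-lam) * exp (c * lam) = exp ((c - 1) * lam)"
    by (simp add: algebra_simps flip: exp_add)
  ultimately have sums: "(\<lambda>K. exp (-lam) * ((c * lam) ^ K / fact K)) sums exp ((c - 1) * lam)"
    by simp
  have "(\<integral>\<^sup>+ K. ennreal (c ^ K) \<partial>measure_pmf (poisson_pmf lam))
      = (\<integral>\<^sup>+ K. ennreal (pmf (poisson_pmf lam) K) * ennreal (c ^ K) \<partial>count_space UNIV)"
    by (rule nn_integral_measure_pmf)
  also have "\<dots> = (\<Sum>K. ennreal (exp (-lam) * ((c * lam) ^ K / fact K)))"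
    using assms by (subst nn_integral_count_space_nat)
      (simp add: power_mult_distrib mult_ac flip: ennreal_mult')
  also have "\<dots> = ennreal (exp ((c - 1) * lam))"
    using sums assms by (subst suminf_ennreal2) (auto simp: sums_iff)
  finally show ?thesis .
qed

lemma emeasure_large_component_le_with_tail:
  "emeasure uniform_points {X \<in> space uniform_points. \<not> no_component_larger r m (K, X :: nat \<Rightarrow> real^'d)}
     \<le> ennreal ((2 * real n) ^ Suc m * 4 ^ Suc m * ((4 * max r 0) ^ CARD('d)) ^ m)
       + ennreal (1 / 4 ^ n) * ennreal (2 ^ K)"
proof (cases "K \<le> 2 * n")
  case True
  have "real K ^ Suc m \<le> (2 * real n) ^ Suc m"
    using True by (intro power_mono) auto
  have "emeasure uniform_points {X \<in> space uniform_points. \<not> no_component_larger r m (K, X :: nat \<Rightarrow> real^'d)}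
      \<le> ennreal (real K ^ Suc m * 4 ^ Suc m * ((4 * max r 0) ^ CARD('d)) ^ m)"
    by (rule emeasure_large_component_le)
  also have "\<dots> \<le> ennreal ((2 * real n) ^ Suc m * 4 ^ Suc m * ((4 * max r 0) ^ CARD('d)) ^ m)"
    using \<open>real K ^ Suc m \<le> _\<close> by (intro ennreal_leI mult_right_mono) auto
  finally show ?thesis
    by (simp add: add_increasing2)
next
  case False
  interpret prob_space "uniform_points :: (nat \<Rightarrow> real^'d) measure"
    by (intro prob_space_PiM prob_space_uniform_cube)
  have "(4::real) ^ n = 2 ^ (2 * n)"
    by (simp add: power_mult)
  also have "\<dots> \<le> 2 ^ K"
    using False by (intro power_increasing) auto
  finally have "1 \<le> ennreal (1 / 4 ^ n) * ennreal (2 ^ K)"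
    by (simp add: field_simps flip: ennreal_mult')
  with emeasure_le_1 show ?thesis
    by (rule order.trans[OF _ order.trans[OF _ add_increasing[OF zero_le order.refl]]])
qed

lemma prob_no_component_larger_ge:
  assumes "0 < n"
  shows "1 - ((2 * real n) ^ Suc m * 4 ^ Suc m * ((4 * max r 0) ^ CARD('d)) ^ m + exp (real n) / 4 ^ n)
    \<le> measure (poisson_process (real n) :: (nat \<times> (nat \<Rightarrow> real^'d)) measure)
          {\<omega> \<in> space (poisson_process (real n)). no_component_larger r m \<omega>}"
proof -
  define A where "A = (2 * real n) ^ Suc m * 4 ^ Suc m * ((4 * max r 0) ^ CARD('d)) ^ m"
  let ?P = "poisson_process (real n) :: (nat \<times> (nat \<Rightarrow> real^'d)) measure"
  let ?G = "{\<omega> \<in> space ?P. no_component_larger r m \<omega>}"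
  interpret P: prob_space ?P
    by (rule prob_space_poisson_process)
  interpret U: prob_space "uniform_points :: (nat \<Rightarrow> real^'d) measure"
    by (intro prob_space_PiM prob_space_uniform_cube)
  have A: "0 \<le> A"
    by (simp add: A_def)
  have G: "?G \<in> sets ?P"
    by (rule sets_poisson_process_no_component_larger)
  have slice: "Pair K -` (space ?P - ?G)
      = {X \<in> space uniform_points. \<not> no_component_larger r m (K, X :: nat \<Rightarrow> real^'d)}" for K
    by (auto simp: poisson_process_def space_pair_measure)
  have "emeasure ?P (space ?P - ?G)
      = \<integral>\<^sup>+ K. emeasure uniform_points (Pair K -` (space ?P - ?G)) \<partial>poisson_pmf (real n)"
    using G unfolding poisson_process_def by (intro U.emeasure_pair_measure_alt) auto
  also have "\<dots> \<le> \<integral>\<^sup>+ K. ennreal A + ennreal (1 / 4 ^ n) * ennreal (2 ^ K) \<partial>poisson_pmf (real n)"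
    unfolding slice A_def by (intro nn_integral_mono emeasure_large_component_le_with_tail)
  also have "\<dots> = ennreal A + ennreal (1 / 4 ^ n) * ennreal (exp (real n))"
    using assms by (simp add: nn_integral_add nn_integral_cmult nn_integral_poisson_pow[of _ 2])
  also have "\<dots> = ennreal (A + exp (real n) / 4 ^ n)"
    using A by (simp flip: ennreal_mult' ennreal_plus)
  finally have "P.prob (space ?P - ?G) \<le> A + exp (real n) / 4 ^ n"
    using A by (simp add: P.emeasure_eq_measure del: ennreal_plus)
  then show ?thesis
    using P.prob_compl[OF G] by (simp add: A_def)
qed

section \<open>Asymptotics\<close>

lemma one_less_ln:
  fixes x :: real
  assumes "exp 1 < x"
  shows "1 < ln x"
proof -
  have "ln (exp 1) < ln x"
    using assms by (subst ln_less_cancel_iff) (auto intro: order.strict_trans[OF exp_gt_zero])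
  then show ?thesis
    by simp
qed

lemma le_ln_powr_if_ge_ln_div_ln_ln:
  fixes x \<alpha> t :: real
  assumes "0 < \<alpha>" "exp 1 < x" "ln x / (\<alpha> * ln (ln x)) \<le> t"
  shows "x \<le> ln x powr (t * \<alpha>)"
proof -
  have L: "1 < ln x"
    using assms(2) by (rule one_less_ln)
  then have "ln x \<le> t * \<alpha> * ln (ln x)"
    using assms(1,3) by (simp add: divide_le_eq mult_ac)
  then have "exp (ln x) \<le> exp (t * \<alpha> * ln (ln x))"
    by simp
  moreover have "0 < x" "x \<noteq> 1"
    using assms(2) L by (auto intro: order.strict_trans[OF exp_gt_zero])
  ultimately show ?thesis
    by (simp add: powr_def)
qed

lemma union_bound_le_half_pow:
  fixes \<alpha> r :: real and n m d :: nat
  assumes "0 < \<alpha>" "4 \<le> n" "1 \<le> d"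
    and r: "real n * r ^ d \<le> 1 / (16 * 4 ^ d) / ln (real n) powr \<alpha>"
    and m: "ln (real n) / (\<alpha> * ln (ln (real n))) \<le> real m"
  shows "(2 * real n) ^ Suc m * 4 ^ Suc m * ((4 * max r 0) ^ d) ^ m \<le> 8 * (1 / 2) ^ m"
proof -
  define L where "L = ln (real n)"
  define \<rho> where "\<rho> = max r 0"
  define x where "x = 8 * 4 ^ d * real n * \<rho> ^ d"
  have "exp 1 < real n"
    using exp_le assms(2) by linarith
  then have n_le: "real n \<le> L powr (real m * \<alpha>)"
    unfolding L_def by (rule le_ln_powr_if_ge_ln_div_ln_ln[OF assms(1) _ m])
  have L: "1 < L"
    using \<open>exp 1 < real n\<close> unfolding L_def by (rule one_less_ln)
  have \<rho>: "real n * \<rho> ^ d \<le> 1 / (16 * 4 ^ d) / L powr \<alpha>"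
  proof (cases "0 \<le> r")
    case True
    then show ?thesis using r by (simp add: \<rho>_def L_def)
  next
    case False
    then show ?thesis using assms(3) L by (simp add: \<rho>_def power_0_left)
  qed
  have x0: "0 \<le> x"
    by (simp add: x_def \<rho>_def)
  have "x = 8 * 4 ^ d * (real n * \<rho> ^ d)"
    by (simp add: x_def)
  also have "\<dots> \<le> 8 * 4 ^ d * (1 / (16 * 4 ^ d) / L powr \<alpha>)"
    using \<rho> by (intro mult_left_mono) auto
  also have "\<dots> = (1 / 2) / L powr \<alpha>"
    by simp
  finally have x: "x \<le> (1 / 2) / L powr \<alpha>" .
  have eight: "(2::real) ^ m * 4 ^ m = 8 ^ m"
    by (simp flip: power_mult_distrib)
  have "(2 * real n) ^ Suc m * 4 ^ Suc m * ((4 * \<rho>) ^ d) ^ m = 8 * real n * x ^ m"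
    using eight by (simp add: x_def power_mult_distrib algebra_simps)
  also have "\<dots> \<le> 8 * real n * ((1 / 2) / L powr \<alpha>) ^ m"
    using x x0 by (intro mult_left_mono power_mono) auto
  also have "((1 / 2) / L powr \<alpha>) ^ m = (1 / 2) ^ m / L powr (real m * \<alpha>)"
    using L by (simp add: power_divide powr_power)
  also have "8 * real n * ((1 / 2) ^ m / L powr (real m * \<alpha>))
      = 8 * (1 / 2) ^ m * (real n / L powr (real m * \<alpha>))"
    by simp
  also have "\<dots> \<le> 8 * (1 / 2) ^ m * 1"
    using n_le L by (intro mult_left_mono) (auto simp: divide_le_eq)
  finally show ?thesis
    by (simp only: \<rho>_def mult_1_right)
qed

lemma filterlim_at_top_if_ge_ln_div_ln_ln:
  fixes \<alpha> :: real and m :: "nat \<Rightarrow> nat"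
  assumes "0 < \<alpha>" "\<forall>\<^sub>F n in sequentially. ln (real n) / (\<alpha> * ln (ln (real n))) \<le> real (m n)"
  shows "filterlim m at_top sequentially"
proof -
  have "filterlim (\<lambda>n::nat. ln (real n) / ln (ln (real n))) at_top sequentially"
    by real_asymp
  then have "filterlim (\<lambda>n::nat. (1 / \<alpha>) * (ln (real n) / ln (ln (real n)))) at_top sequentially"
    using assms(1) by (intro filterlim_tendsto_pos_mult_at_top[OF tendsto_const]) simp_all
  moreover have "\<forall>\<^sub>F n in sequentially. (1 / \<alpha>) * (ln (real n) / ln (ln (real n))) \<le> real (m n)"
    using assms(2) by (simp add: mult.commute)
  ultimately have "filterlim (\<lambda>n. real (m n)) at_top sequentially"
    by (rule filterlim_at_top_mono)
  then show ?thesis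
    by (simp add: filterlim_sequentially_iff_filterlim_real)
qed

lemma exp_div_four_pow_tendsto_0: "(\<lambda>n. exp (real n) / 4 ^ n) \<longlonglongrightarrow> 0"
proof -
  have "(\<lambda>n. (exp 1 / 4 :: real) ^ n) \<longlonglongrightarrow> 0"
    by (rule LIMSEQ_power_zero) (use exp_le in simp)
  moreover have "(exp 1 / 4 :: real) ^ n = exp (real n) / 4 ^ n" for n
    using exp_of_nat_mult[of n "1 :: real"] by (simp add: power_divide)
  ultimately show ?thesis
    by simp
qed

lemma prob_no_component_larger_ge_half_pow:
  fixes \<alpha> r :: real and n m :: nat
  assumes "0 < \<alpha>" "4 \<le> n"
    and "real n * r ^ CARD('d) \<le> 1 / (16 * 4 ^ CARD('d)) / ln (real n) powr \<alpha>"
    and "ln (real n) / (\<alpha> * ln (ln (real n))) \<le> real m"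
  shows "1 - (8 * (1 / 2) ^ m + exp (real n) / 4 ^ n)
    \<le> measure (poisson_process (real n) :: (nat \<times> (nat \<Rightarrow> real^'d)) measure)
          {\<omega> \<in> space (poisson_process (real n)). no_component_larger r m \<omega>}"
proof -
  have "(2 * real n) ^ Suc m * 4 ^ Suc m * ((4 * max r 0) ^ CARD('d)) ^ m \<le> 8 * (1 / 2) ^ m"
    using assms by (intro union_bound_le_half_pow) auto
  then have "1 - (8 * (1 / 2) ^ m + exp (real n) / 4 ^ n)
      \<le> 1 - ((2 * real n) ^ Suc m * 4 ^ Suc m * ((4 * max r 0) ^ CARD('d)) ^ m + exp (real n) / 4 ^ n)"
    by linarith
  also have "\<dots> \<le> measure (poisson_process (real n) :: (nat \<times> (nat \<Rightarrow> real^'d)) measure)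
          {\<omega> \<in> space (poisson_process (real n)). no_component_larger r m \<omega>}"
    using assms(2) by (intro prob_no_component_larger_ge) simp
  finally show ?thesis .
qed

theorem lemma4p2:
  fixes \<alpha> :: real
  assumes "\<alpha> > 0"
  shows "\<exists>C2 > 0. \<forall>(r :: nat \<Rightarrow> real) (m :: nat \<Rightarrow> nat).
     (\<forall>\<^sub>F n in sequentially. real n * r n ^ CARD('d) \<le> C2 / ln (real n) powr \<alpha>
                              \<and> real (m n) \<ge> ln (real n) / (\<alpha> * ln (ln (real n)))) \<longrightarrow>
     ((\<lambda>n. measure (poisson_process (real n) :: (nat \<times> (nat \<Rightarrow> real^'d)) measure)
              {\<omega> \<in> space (poisson_process (real n)). no_component_larger (r n) (m n) \<omega>})
        \<longlonglongrightarrow> 1)"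
proof (intro exI[of _ "1 / (16 * 4 ^ CARD('d))"] conjI allI impI)
  fix r :: "nat \<Rightarrow> real" and m :: "nat \<Rightarrow> nat"
  assume hyps: "\<forall>\<^sub>F n in sequentially. real n * r n ^ CARD('d) \<le> 1 / (16 * 4 ^ CARD('d)) / ln (real n) powr \<alpha>
                              \<and> real (m n) \<ge> ln (real n) / (\<alpha> * ln (ln (real n)))"
  define P where "P n = measure (poisson_process (real n) :: (nat \<times> (nat \<Rightarrow> real^'d)) measure)
    {\<omega> \<in> space (poisson_process (real n)). no_component_larger (r n) (m n) \<omega>}" for n
  define \<delta> where "\<delta> n = 8 * (1 / 2) ^ m n + exp (real n) / 4 ^ n" for n
  have "filterlim m at_top sequentially"
    using assms hyps by (intro filterlim_at_top_if_ge_ln_div_ln_ln) (auto elim: eventually_mono)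
  then have "(\<lambda>n. (1 / 2 :: real) ^ m n) \<longlonglongrightarrow> 0"
    using filterlim_compose[OF LIMSEQ_power_zero[of "1 / 2 :: real"]] by (simp add: o_def)
  then have lower_limit: "(\<lambda>n. 1 - \<delta> n) \<longlonglongrightarrow> 1 - (8 * 0 + 0)"
    unfolding \<delta>_def by (intro tendsto_intros exp_div_four_pow_tendsto_0)
  have lower: "\<forall>\<^sub>F n in sequentially. 1 - \<delta> n \<le> P n"
    using hyps eventually_ge_at_top[of 4]
  proof eventually_elim
    case (elim n)
    then show ?case
      unfolding P_def \<delta>_def by (intro prob_no_component_larger_ge_half_pow[OF assms]) auto
  qed
  have upper: "P n \<le> 1" for n
    unfolding P_def by (rule prob_space.prob_le_1[OF prob_space_poisson_process])
  show "P \<longlonglongrightarrow> 1"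
    using tendsto_sandwich[OF lower always_eventually[OF allI[OF upper]]] lower_limit by simp
qed (simp)

end
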